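(* Let $G$ be a group with a finite symmetric generating set $X$, let $\phi:G\to G'$ be an epimorphism of groups, and take $X'=\phi(X)$ as generating set for $G'$. Then for all $n\ge0$, $\Gamma_{G,X}(n)\ge\Gamma_{G',X'}(n)$.
   Context: A word over a generating set is a geodesic if its length equals the word length of the element it represents; $\Gamma_{G,X}(n)$ is the number of geodesic words over $X$ of length at most $n$. *)

theory Defs
  imports "HOL-Algebra.Algebra"
begin

text \<open>Words over a generating set S of a group G are lists of elements of S
(S is symmetric, so no formal inverse letters are needed).\<close>

definition word_eval :: "('a, 'b) monoid_scheme \<Rightarrow> 'a list \<Rightarrow> 'a" where
  "word_eval G w = foldr (monoid.mult G) w (monoid.one G)"

definition word_length :: "('a, 'b) monoid_scheme \<Rightarrow> 'a set \<Rightarrow> 'a \<Rightarrow> nat" where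
  "word_length G S g = (LEAST n. \<exists>w \<in> lists S. length w = n \<and> word_eval G w = g)"

definition geodesic :: "('a, 'b) monoid_scheme \<Rightarrow> 'a set \<Rightarrow> 'a list \<Rightarrow> bool" where
  "geodesic G S w \<longleftrightarrow> w \<in> lists S \<and> length w = word_length G S (word_eval G w)"

definition geodesic_growth :: "('a, 'b) monoid_scheme \<Rightarrow> 'a set \<Rightarrow> nat \<Rightarrow> nat" where
  "geodesic_growth G S n = card {w. geodesic G S w \<and> length w \<le> n}"

end

theory Submission
  imports Defs
begin

text \<open>Choose for every letter of \<open>\<phi> ` S\<close> a preimage in \<open>S\<close>. Letterwise lifting is injective
  on words over \<open>\<phi> ` S\<close>, and it sends geodesics to geodesics: \<open>\<phi>\<close> maps a geodesic
  representative of the lifted element to a word of the same length representing the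
  original element, so word length can only drop under \<open>\<phi>\<close>. Hence the geodesics of length
  at most \<open>n\<close> in \<open>G'\<close> inject into those of \<open>G\<close>.\<close>

lemma word_eval_Cons [simp]: "word_eval G (a # w) = a \<otimes>\<^bsub>G\<^esub> word_eval G w"
  by (simp add: word_eval_def)

lemma word_eval_closed:
  assumes "monoid G" "set w \<subseteq> carrier G"
  shows "word_eval G w \<in> carrier G"
  using assms(2)
  by (induction w) (simp_all add: word_eval_def monoid.one_closed[OF assms(1)] monoid.m_closed[OF assms(1)])

lemma hom_word_eval:
  assumes "group_hom G H \<phi>" "set w \<subseteq> carrier G"
  shows "\<phi> (word_eval G w) = word_eval H (map \<phi> w)"
  using assms(2)
proof (induction w)
  case Nil
  show ?case using group_hom.hom_one[OF assms(1)] by (simp add: word_eval_def)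
next
  case (Cons a w)
  interpret group_hom G H \<phi> by (fact assms(1))
  have "word_eval G w \<in> carrier G"
    using Cons.prems word_eval_closed[OF G.is_monoid] by simp
  then show ?case using Cons by simp
qed

lemma word_length_le:
  assumes "w \<in> lists S"
  shows "word_length G S (word_eval G w) \<le> length w"
  unfolding word_length_def by (rule Least_le) (use assms in blast)

lemma word_length_attained:
  assumes "w \<in> lists S"
  obtains u where "u \<in> lists S" "length u = word_length G S (word_eval G w)"
    "word_eval G u = word_eval G w"
proof -
  have "\<exists>n. \<exists>u\<in>lists S. length u = n \<and> word_eval G u = word_eval G w"
    using assms by blast
  then have "\<exists>u\<in>lists S. length u = word_length G S (word_eval G w) \<and> word_eval G u = word_eval G w"
    unfolding word_length_def by (rule LeastI_ex)
  with that show ?thesis by blast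
qed

lemma word_length_hom_le:
  assumes "group_hom G H \<phi>" "S \<subseteq> carrier G" "w \<in> lists S"
  shows "word_length H (\<phi> ` S) (\<phi> (word_eval G w)) \<le> word_length G S (word_eval G w)"
proof -
  obtain u where u: "u \<in> lists S" "length u = word_length G S (word_eval G w)"
    "word_eval G u = word_eval G w"
    using word_length_attained[OF assms(3)] .
  have "\<phi> (word_eval G w) = word_eval H (map \<phi> u)"
    using hom_word_eval[OF assms(1), of u] u(1,3) assms(2) by auto
  moreover have "map \<phi> u \<in> lists (\<phi> ` S)"
    using u(1) by auto
  ultimately show ?thesis
    using word_length_le u(2) by (metis length_map)
qed

lemma geodesic_if_hom_image_geodesic:
  assumes "group_hom G H \<phi>" "S \<subseteq> carrier G" "w \<in> lists S"
    and "geodesic H (\<phi> ` S) (map \<phi> w)"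
  shows "geodesic G S w"
proof -
  have "set w \<subseteq> carrier G"
    using assms(2,3) by auto
  then have "length w = word_length H (\<phi> ` S) (\<phi> (word_eval G w))"
    using assms(4) hom_word_eval[OF assms(1)] by (simp add: geodesic_def)
  also have "\<dots> \<le> word_length G S (word_eval G w)"
    using word_length_hom_le[OF assms(1-3)] .
  finally show ?thesis
    using word_length_le[OF assms(3), of G] assms(3) by (simp add: geodesic_def)
qed

lemma finite_short_geodesics:
  assumes "finite S"
  shows "finite {w. geodesic G S w \<and> length w \<le> n}"
  by (rule finite_subset[OF _ finite_lists_length_le[OF assms, of n]])
    (auto simp: geodesic_def)

theorem lemma2p6:
  fixes G :: "('a, 'b) monoid_scheme" and G' :: "('c, 'd) monoid_scheme"
    and S :: "'a set" and \<phi> :: "'a \<Rightarrow> 'c" and n :: nat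
  assumes "group G" and "group G'"
    and "finite S" and "S \<subseteq> carrier G"
    and "\<forall>x\<in>S. inv\<^bsub>G\<^esub> x \<in> S"
    and "generate G S = carrier G"
    and "\<phi> \<in> hom G G'" and "\<phi> ` carrier G = carrier G'"
  shows "geodesic_growth G S n \<ge> geodesic_growth G' (\<phi> ` S) n"
proof -
  have hom: "group_hom G G' \<phi>"
    using assms(1,2,7) by (simp add: group_hom_def group_hom_axioms_def)
  let ?lift = "map (inv_into S \<phi>)"
  let ?A = "{w. geodesic G' (\<phi> ` S) w \<and> length w \<le> n}"
  let ?B = "{w. geodesic G S w \<and> length w \<le> n}"
  have lift: "?lift w \<in> lists S" "map \<phi> (?lift w) = w" if "w \<in> lists (\<phi> ` S)" for w
    using that by (auto simp: inv_into_into f_inv_into_f map_idI)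
  have "inj_on ?lift ?A"
    by (rule inj_on_inverseI[where g = "map \<phi>"]) (use lift(2) in \<open>auto simp: geodesic_def\<close>)
  moreover have "?lift ` ?A \<subseteq> ?B"
  proof clarify
    fix w assume w: "geodesic G' (\<phi> ` S) w" "length w \<le> n"
    then have "w \<in> lists (\<phi> ` S)"
      by (simp add: geodesic_def)
    with w show "geodesic G S (?lift w) \<and> length (?lift w) \<le> n"
      using geodesic_if_hom_image_geodesic[OF hom assms(4)] lift by simp
  qed
  ultimately show ?thesis
    unfolding geodesic_growth_def
    using card_inj_on_le finite_short_geodesics[OF assms(3)] by blast
qed

end
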